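(* Let $F$ be a field with $\mathrm{char}\,F\ne2$ and let $A$ be an involutive $F$-algebra. The following are equivalent: (i) $A$ is von-Neumann finite; (ii) every $3$-dimensional subalgebra of $A$ is either commutative or associative; (iii) every $3$-dimensional subalgebra of $A$ is either commutative or isomorphic to the algebra $U$ of upper triangular $2\times2$ matrices over $F$.
   Context: Algebras are unital, with bilinear not necessarily associative multiplication. $A$ is involutive if there is an anti-automorphism $a\mapsto\bar a$ with $\bar{\bar a}=a$, $a+\bar a\in F1$ and $a\bar a\in F1$ for all $a\in A$. $A$ is von-Neumann finite if $ab=1$ implies $ba=1$ for all $a,b\in A$. *)

theory Defs
  imports Main "HOL.Vector_Spaces"
begin

definition is_algebra :: "('f::field \<Rightarrow> 'a::ab_group_add \<Rightarrow> 'a) \<Rightarrow> ('a \<Rightarrow> 'a \<Rightarrow> 'a) \<Rightarrow> 'a \<Rightarrow> bool" where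
  "is_algebra sc mul e \<longleftrightarrow>
     vector_space sc \<and>
     (\<forall>x y z. mul (x + y) z = mul x z + mul y z) \<and>
     (\<forall>x y z. mul x (y + z) = mul x y + mul x z) \<and>
     (\<forall>c x y. mul (sc c x) y = sc c (mul x y)) \<and>
     (\<forall>c x y. mul x (sc c y) = sc c (mul x y)) \<and>
     (\<forall>x. mul e x = x \<and> mul x e = x)"

definition involutive :: "('f::field \<Rightarrow> 'a::ab_group_add \<Rightarrow> 'a) \<Rightarrow> ('a \<Rightarrow> 'a \<Rightarrow> 'a) \<Rightarrow> 'a \<Rightarrow> bool" where
  "involutive sc mul e \<longleftrightarrow>
     (\<exists>inv :: 'a \<Rightarrow> 'a.
        (\<forall>x y. inv (x + y) = inv x + inv y) \<and>
        (\<forall>c x. inv (sc c x) = sc c (inv x)) \<and>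
        (\<forall>x y. inv (mul x y) = mul (inv y) (inv x)) \<and>
        (\<forall>x. inv (inv x) = x) \<and>
        (\<forall>x. \<exists>t. x + inv x = sc t e) \<and>
        (\<forall>x. \<exists>n. mul x (inv x) = sc n e))"

definition vN_finite :: "('a \<Rightarrow> 'a \<Rightarrow> 'a) \<Rightarrow> 'a \<Rightarrow> bool" where
  "vN_finite mul e \<longleftrightarrow> (\<forall>a b. mul a b = e \<longrightarrow> mul b a = e)"

definition subalg :: "('f::field \<Rightarrow> 'a::ab_group_add \<Rightarrow> 'a) \<Rightarrow> ('a \<Rightarrow> 'a \<Rightarrow> 'a) \<Rightarrow> 'a \<Rightarrow> 'a set \<Rightarrow> bool" where
  "subalg sc mul e B \<longleftrightarrow> module.subspace sc B \<and> e \<in> B \<and> (\<forall>x\<in>B. \<forall>y\<in>B. mul x y \<in> B)"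

definition comm_on :: "('a \<Rightarrow> 'a \<Rightarrow> 'a) \<Rightarrow> 'a set \<Rightarrow> bool" where
  "comm_on mul B \<longleftrightarrow> (\<forall>x\<in>B. \<forall>y\<in>B. mul x y = mul y x)"

definition assoc_on :: "('a \<Rightarrow> 'a \<Rightarrow> 'a) \<Rightarrow> 'a set \<Rightarrow> bool" where
  "assoc_on mul B \<longleftrightarrow> (\<forall>x\<in>B. \<forall>y\<in>B. \<forall>z\<in>B. mul (mul x y) z = mul x (mul y z))"

text \<open>The algebra U of upper triangular 2x2 matrices over 'f: the triple (a,b,c)
stands for the matrix [[a,b],[0,c]]; addition and scaling are componentwise,
multiplication is matrix multiplication.\<close>

definition ut_mul :: "'f::field \<times> 'f \<times> 'f \<Rightarrow> 'f \<times> 'f \<times> 'f \<Rightarrow> 'f \<times> 'f \<times> 'f" where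
  "ut_mul u v = (case u of (a, b, c) \<Rightarrow> case v of (a', b', c') \<Rightarrow>
                   (a * a', a * b' + b * c', c * c'))"

definition ut_add :: "'f::field \<times> 'f \<times> 'f \<Rightarrow> 'f \<times> 'f \<times> 'f \<Rightarrow> 'f \<times> 'f \<times> 'f" where
  "ut_add u v = (case u of (a, b, c) \<Rightarrow> case v of (a', b', c') \<Rightarrow> (a + a', b + b', c + c'))"

definition ut_scale :: "'f::field \<Rightarrow> 'f \<times> 'f \<times> 'f \<Rightarrow> 'f \<times> 'f \<times> 'f" where
  "ut_scale r u = (case u of (a, b, c) \<Rightarrow> (r * a, r * b, r * c))"

definition iso_to_U :: "('f::field \<Rightarrow> 'a::ab_group_add \<Rightarrow> 'a) \<Rightarrow> ('a \<Rightarrow> 'a \<Rightarrow> 'a) \<Rightarrow> 'a \<Rightarrow> 'a set \<Rightarrow> bool" where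
  "iso_to_U sc mul e B \<longleftrightarrow>
     (\<exists>\<phi> :: 'a \<Rightarrow> 'f \<times> 'f \<times> 'f.
        bij_betw \<phi> B UNIV \<and>
        (\<forall>x\<in>B. \<forall>y\<in>B. \<phi> (x + y) = ut_add (\<phi> x) (\<phi> y)) \<and>
        (\<forall>c. \<forall>x\<in>B. \<phi> (sc c x) = ut_scale c (\<phi> x)) \<and>
        (\<forall>x\<in>B. \<forall>y\<in>B. \<phi> (mul x y) = ut_mul (\<phi> x) (\<phi> y)) \<and>
        \<phi> e = (1, 0, 1))"

end

theory Submission imports Defs begin

text \<open>In an involutive algebra every element is quadratic, x^2 = t(x) x - n(x) 1, with
t(x) 1 = x + conj x and n(x) 1 = x conj x.  Hence span {1, a, b} is a subalgebra as soon as
it contains ab, and it is 3-dimensional when a and b do not commute.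

If ab = 1 but ba \<noteq> 1, this subalgebra is noncommutative; if it were associative, then
n(a) b = (conj a a) b = conj a (a b) = conj a, which forces ba = 1.  Conversely (char F \<noteq> 2),
a noncommutative 3-dimensional subalgebra has a basis 1, x, y with x, y of trace zero and
xy - yx = 2x, so that x^2 = -n(x), y^2 = -n(y), xy = s + x and yx = s - x.  Testing von
Neumann finiteness on explicit one-sided inverses forces s = n(x) = 0 and n(y) = -1: this is
the multiplication table of U, with x = E12 and y = E22 - E11.  Finally U is associative.\<close>

context vector_space
begin

lemma subset_span_if_independent_card_eq_dim:
  assumes "independent A" "A \<subseteq> B" "card A = dim B" "0 < card A"
  shows "B \<subseteq> span A"
proof
  fix z assume "z \<in> B"
  obtain C where C: "C \<subseteq> B" "independent C" "B \<subseteq> span C" "card C = dim B"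
    by (rule basis_exists)
  have "finite A" "finite C"
    using assms C(4) by (metis card.infinite less_irrefl)+
  show "z \<in> span A"
  proof (rule ccontr)
    assume z: "z \<notin> span A"
    then have "z \<notin> A" by (auto intro: span_base)
    have "independent (insert z A)"
      using assms(1) z by (rule independent_insertI[rotated])
    moreover have "insert z A \<subseteq> span C"
      using C(3) assms(2) \<open>z \<in> B\<close> by blast
    ultimately have "card (insert z A) \<le> card C"
      using independent_span_bound[OF \<open>finite C\<close>] by blast
    then show False
      using \<open>finite A\<close> \<open>z \<notin> A\<close> assms(3) C(4) by simp
  qed
qed

end

lemma iso_to_U_if_embedding:
  fixes \<psi> :: "'f::field \<times> 'f \<times> 'f \<Rightarrow> 'a::ab_group_add"
  assumes inj: "inj \<psi>" and range: "range \<psi> = B"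
    and add: "\<And>u v. \<psi> (ut_add u v) = \<psi> u + \<psi> v"
    and scale: "\<And>r u. \<psi> (ut_scale r u) = sc r (\<psi> u)"
    and mul: "\<And>u v. \<psi> (ut_mul u v) = mul (\<psi> u) (\<psi> v)"
    and unit: "\<psi> (1, 0, 1) = e"
  shows "iso_to_U sc mul e B"
proof -
  define \<phi> where "\<phi> = inv_into UNIV \<psi>"
  have \<phi>_\<psi> [simp]: "\<phi> (\<psi> u) = u" for u
    using inj by (simp add: \<phi>_def)
  show ?thesis
    unfolding iso_to_U_def range[symmetric]
  proof (intro exI[of _ \<phi>] conjI ballI allI)
    show "bij_betw \<phi> (range \<psi>) UNIV"
      unfolding \<phi>_def by (rule bij_betw_inv_into) (simp add: bij_betw_def inj)
    show "\<phi> (x + y) = ut_add (\<phi> x) (\<phi> y)" if "x \<in> range \<psi>" "y \<in> range \<psi>" for x y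
      using that by (auto simp flip: add)
    show "\<phi> (sc r x) = ut_scale r (\<phi> x)" if "x \<in> range \<psi>" for r x
      using that by (auto simp flip: scale)
    show "\<phi> (mul x y) = ut_mul (\<phi> x) (\<phi> y)" if "x \<in> range \<psi>" "y \<in> range \<psi>" for x y
      using that by (auto simp flip: mul)
    show "\<phi> e = (1, 0, 1)"
      by (simp flip: unit)
  qed
qed

locale unital_algebra = vector_space sc
  for sc :: "'f::field \<Rightarrow> 'a::ab_group_add \<Rightarrow> 'a" (infixr \<open>*s\<close> 75) +
  fixes mul :: "'a \<Rightarrow> 'a \<Rightarrow> 'a" (infixl \<open>**\<close> 70) and e :: 'a
  assumes mul_add_left: "(x + y) ** z = x ** z + y ** z"
    and mul_add_right: "x ** (y + z) = x ** y + x ** z"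
    and mul_scale_left: "(c *s x) ** y = c *s (x ** y)"
    and mul_scale_right: "x ** (c *s y) = c *s (x ** y)"
    and mul_unit_left [simp]: "e ** x = x"
    and mul_unit_right [simp]: "x ** e = x"
begin

lemma mul_zero_left [simp]: "0 ** x = 0"
  using mul_add_left[of 0 0 x] by simp

lemma mul_zero_right [simp]: "x ** 0 = 0"
  using mul_add_right[of x 0 0] by simp

lemma mul_minus_left: "(- x) ** y = - (x ** y)"
  using mul_add_left[of x "- x" y] by (metis minus_unique add.right_inverse mul_zero_left)

lemma mul_minus_right: "x ** (- y) = - (x ** y)"
  using mul_add_right[of x y "- y"] by (metis minus_unique add.right_inverse mul_zero_right)

lemma mul_diff_left: "(x - y) ** z = x ** z - y ** z"
  using mul_add_left[of x "- y" z] by (simp add: mul_minus_left)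

lemma mul_diff_right: "z ** (x - y) = z ** x - z ** y"
  using mul_add_right[of z x "- y"] by (simp add: mul_minus_right)

lemmas mul_simps = mul_add_left mul_add_right mul_scale_left mul_scale_right
  mul_minus_left mul_minus_right mul_diff_left mul_diff_right

lemma eq_zero_if_unit_eq_zero: "e = 0 \<Longrightarrow> (x::'a) = 0"
  using mul_unit_left[of x] by simp

lemma vN_finite_if_unit_eq_zero: "e = 0 \<Longrightarrow> vN_finite mul e"
  by (simp add: vN_finite_def eq_zero_if_unit_eq_zero)

lemma dim_eq_zero_if_unit_eq_zero: "e = 0 \<Longrightarrow> dim B = 0"
  using dim_le_card[of B "{}"] eq_zero_if_unit_eq_zero by auto

definition comb :: "'a \<Rightarrow> 'a \<Rightarrow> 'f \<Rightarrow> 'f \<Rightarrow> 'f \<Rightarrow> 'a" where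
  "comb p q a b c = a *s e + b *s p + c *s q"

lemma mul_comb_left: "comb p q a b c ** z = a *s z + b *s (p ** z) + c *s (q ** z)"
  by (simp add: comb_def mul_simps)

lemma mul_comb_right: "z ** comb p q a b c = a *s z + b *s (z ** p) + c *s (z ** q)"
  by (simp add: comb_def mul_simps)

lemma comb_add: "comb p q a b c + comb p q a' b' c' = comb p q (a + a') (b + b') (c + c')"
  by (simp add: comb_def scale_left_distrib algebra_simps)

lemma comb_scale: "r *s comb p q a b c = comb p q (r * a) (r * b) (r * c)"
  by (simp add: comb_def scale_right_distrib)

lemma comb_diff: "comb p q a b c - comb p q a' b' c' = comb p q (a - a') (b - b') (c - c')"
  by (simp add: comb_def scale_left_diff_distrib algebra_simps)

lemma mem_span_unit_pair_iff: "z \<in> span {e, p, q} \<longleftrightarrow> (\<exists>a b c. z = comb p q a b c)"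
proof
  assume "z \<in> span {e, p, q}"
  then obtain a b c where "z - a *s e - b *s p = c *s q"
    by (auto simp: span_breakdown_eq span_singleton)
  then have "z = comb p q a b c"
    by (simp add: comb_def algebra_simps)
  then show "\<exists>a b c. z = comb p q a b c" by blast
next
  assume "\<exists>a b c. z = comb p q a b c"
  moreover have "e \<in> span {e, p, q}" "p \<in> span {e, p, q}" "q \<in> span {e, p, q}"
    by (auto intro: span_base)
  ultimately show "z \<in> span {e, p, q}"
    by (auto simp: comb_def intro!: span_add span_scale)
qed

lemma comb_in_span_unit_pair: "comb p q a b c \<in> span {e, p, q}"
  using mem_span_unit_pair_iff by blast

lemma unit_neq_zero_if_noncomm: "p ** q \<noteq> q ** p \<Longrightarrow> e \<noteq> 0"
  using eq_zero_if_unit_eq_zero by metis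

lemma comb_eq_0_if_noncomm:
  assumes nc: "p ** q \<noteq> q ** p" and comb: "comb p q a b c = 0"
  shows "a = 0 \<and> b = 0 \<and> c = 0"
proof -
  have "c = 0"
  proof (rule ccontr)
    assume "c \<noteq> 0"
    have "c *s q = - (a *s e + b *s p)"
      using comb unfolding comb_def by (metis add.commute eq_neg_iff_add_eq_0)
    then have "(1 / c) *s (c *s q) = (1 / c) *s (- (a *s e + b *s p))" by simp
    then have "q = (- a / c) *s e + (- b / c) *s p"
      using \<open>c \<noteq> 0\<close> by (simp add: scale_right_distrib scale_right_diff_distrib)
    then show False using nc by (simp add: mul_simps)
  qed
  moreover have "b = 0"
  proof (rule ccontr)
    assume "b \<noteq> 0"
    have "b *s p = - (a *s e)"
      using comb \<open>c = 0\<close> unfolding comb_def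
      by (metis add.commute add_0_right scale_zero_left eq_neg_iff_add_eq_0)
    then have "(1 / b) *s (b *s p) = (1 / b) *s (- (a *s e))" by simp
    then have "p = (- a / b) *s e"
      using \<open>b \<noteq> 0\<close> by simp
    then show False using nc by (simp add: mul_simps)
  qed
  ultimately show ?thesis
    using comb unit_neq_zero_if_noncomm[OF nc] by (simp add: comb_def)
qed

lemma comb_eq_comb_iff:
  assumes "p ** q \<noteq> q ** p"
  shows "comb p q a b c = comb p q a' b' c' \<longleftrightarrow> a = a' \<and> b = b' \<and> c = c'"
proof -
  have "comb p q a b c = comb p q a' b' c' \<longleftrightarrow> comb p q (a - a') (b - b') (c - c') = 0"
    by (simp only: comb_diff[symmetric] right_minus_eq)
  then show ?thesis
    using comb_eq_0_if_noncomm[OF assms, of "a - a'" "b - b'" "c - c'"] by auto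
qed

lemma distinct_unit_pair_noncomm: "p ** q \<noteq> q ** p \<Longrightarrow> e \<noteq> p \<and> e \<noteq> q \<and> p \<noteq> q"
  by (auto simp: eq_commute[of e])

lemma card_unit_pair_noncomm: "p ** q \<noteq> q ** p \<Longrightarrow> card {e, p, q} = 3"
  by (drule distinct_unit_pair_noncomm) simp

lemma independent_unit_pair_noncomm:
  assumes nc: "p ** q \<noteq> q ** p"
  shows "independent {e, p, q}"
proof (rule independent_if_scalars_zero)
  have distinct: "e \<noteq> p" "e \<noteq> q" "p \<noteq> q"
    using distinct_unit_pair_noncomm[OF nc] by auto
  fix f x assume "(\<Sum>x\<in>{e, p, q}. f x *s x) = 0" "x \<in> {e, p, q}"
  moreover from this(1) have "comb p q (f e) (f p) (f q) = 0"
    using distinct by (simp add: comb_def add.assoc)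
  ultimately show "f x = 0"
    using comb_eq_0_if_noncomm[OF nc] by auto
qed simp

lemma dim_span_unit_pair_noncomm: "p ** q \<noteq> q ** p \<Longrightarrow> dim (span {e, p, q}) = 3"
  by (simp add: dim_eq_card_independent independent_unit_pair_noncomm card_unit_pair_noncomm)

lemma subalg_eq_span_unit_pair_if_noncomm:
  assumes B: "subalg sc mul e B" "dim B = 3" and pq: "p \<in> B" "q \<in> B" "p ** q \<noteq> q ** p"
  shows "B = span {e, p, q}"
proof
  have "subspace B" "e \<in> B"
    using B(1) by (simp_all add: subalg_def)
  show "B \<subseteq> span {e, p, q}"
    by (rule subset_span_if_independent_card_eq_dim[OF independent_unit_pair_noncomm[OF pq(3)]])
      (use \<open>e \<in> B\<close> pq B(2) card_unit_pair_noncomm[OF pq(3)] in auto)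
  show "span {e, p, q} \<subseteq> B"
    by (rule span_minimal) (use \<open>subspace B\<close> \<open>e \<in> B\<close> pq in auto)
qed

lemma mul_mem_span_unit_pair:
  assumes gen: "\<And>u v. u \<in> {a, b} \<Longrightarrow> v \<in> {a, b} \<Longrightarrow> u ** v \<in> span {e, a, b}"
    and z: "z \<in> span {e, a, b}" and w: "w \<in> span {e, a, b}"
  shows "z ** w \<in> span {e, a, b}"
proof -
  obtain c0 c1 c2 where z_comb: "z = comb a b c0 c1 c2"
    using z by (auto simp: mem_span_unit_pair_iff)
  obtain d0 d1 d2 where w_comb: "w = comb a b d0 d1 d2"
    using w by (auto simp: mem_span_unit_pair_iff)
  have "u ** w \<in> span {e, a, b}" if "u \<in> {a, b}" for u
    unfolding w_comb mul_comb_right using gen that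
    by (intro span_add span_scale) (auto intro: span_base)
  then show ?thesis
    unfolding z_comb mul_comb_left using w by (intro span_add span_scale) auto
qed

lemma exists_commutator_eigenvector:
  assumes w: "w = p ** q - q ** p" "w = b *s p + c *s q" and "w \<noteq> 0"
  obtains z k where "z \<in> {p, q}" "k \<noteq> 0" "w ** z - z ** w = k *s w"
proof (cases "b = 0")
  case True
  have "(b *s p + c *s q) ** p - p ** (b *s p + c *s q) = (- c) *s (p ** q - q ** p)"
    by (simp add: mul_simps algebra_simps)
  then have "w ** p - p ** w = (- c) *s w"
    by (simp only: w(1)[symmetric] w(2)[symmetric])
  moreover have "c \<noteq> 0"
    using True \<open>w \<noteq> 0\<close> by (simp add: w(2))
  ultimately show thesis
    by (intro that[of p "- c"]) simp_all
next
  case False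
  have "(b *s p + c *s q) ** q - q ** (b *s p + c *s q) = b *s (p ** q - q ** p)"
    by (simp add: mul_simps algebra_simps)
  then have "w ** q - q ** w = b *s w"
    by (simp only: w(1)[symmetric] w(2)[symmetric])
  then show thesis
    using False by (intro that[of q b]) simp_all
qed

lemma mul_comb:
  assumes "x ** x = P *s e" "y ** y = Q *s e" "x ** y = S *s e + x" "y ** x = S *s e - x"
  shows "comb x y a b c ** comb x y a' b' c' =
    comb x y (a * a' + P * b * b' + Q * c * c' + S * (b * c' + c * b'))
      (a * b' + a' * b + (b * c' - c * b')) (a * c' + a' * c)"
proof -
  have "x ** comb x y a' b' c' = comb x y (P * b' + S * c') (a' + c') 0"
    unfolding mul_comb_right unfolding assms comb_def
    by (simp add: scale_left_distrib scale_right_distrib algebra_simps)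
  moreover have "y ** comb x y a' b' c' = comb x y (S * b' + Q * c') (- b') a'"
    unfolding mul_comb_right unfolding assms comb_def
    by (simp add: scale_left_distrib scale_right_distrib scale_right_diff_distrib algebra_simps)
  ultimately show ?thesis
    unfolding mul_comb_left by (simp add: comb_scale comb_add algebra_simps)
qed

lemma structure_constants_if_vN_finite:
  assumes vN: "vN_finite mul e" and two: "(2::'f) \<noteq> 0" and nc: "x ** y \<noteq> y ** x"
    and rel: "x ** x = P *s e" "y ** y = Q *s e" "x ** y = S *s e + x" "y ** x = S *s e - x"
  shows "S = 0 \<and> P = 0 \<and> Q = 1"
proof -
  \<comment> \<open>The products of (a, b, c) and (a', b', c') in either order differ only in the
     x-coordinate, by 2 (b c' - c b').\<close>
  have key: "b * c' = c * b'"
    if "a * a' + P * b * b' + Q * c * c' + S * (b * c' + c * b') = 1"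
      "a * b' + a' * b + (b * c' - c * b') = 0" "a * c' + a' * c = 0"
    for a b c a' b' c'
  proof -
    have "comb x y a b c ** comb x y a' b' c' = comb x y 1 0 0"
      using that by (simp add: mul_comb[OF rel])
    then have "comb x y a b c ** comb x y a' b' c' = e"
      by (simp add: comb_def)
    then have "comb x y a' b' c' ** comb x y a b c = comb x y 1 0 0"
      using vN by (simp add: vN_finite_def comb_def)
    then have "a' * b + a * b' + (b' * c - c' * b) = 0"
      by (simp add: mul_comb[OF rel] comb_eq_comb_iff[OF nc])
    moreover have "2 * (b * c' - c * b') =
        (a * b' + a' * b + (b * c' - c * b')) - (a' * b + a * b' + (b' * c - c' * b))"
      by algebra
    ultimately have "2 * (b * c' - c * b') = 0"
      using that(2) by simp
    with two show ?thesis by simp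
  qed
  have "S = 0"
    using key[where a = 0 and b = 1 and c = 0 and a' = "- 1 / S" and b' = 0 and c' = "1 / S"]
    by (cases "S = 0") (simp_all add: field_simps)
  moreover have "P = 0"
    using key[where a = 0 and b = 1 and c = 0 and a' = "- 1" and b' = "1 / P" and c' = 1] \<open>S = 0\<close>
    by (cases "P = 0") (simp_all add: field_simps)
  moreover have "Q = 1"
  proof (rule ccontr)
    assume "Q \<noteq> 1"
    define d where "d = 1 / (Q - 1)"
    have "- d + Q * d = d * (Q - 1)"
      by (simp add: algebra_simps)
    also have "\<dots> = 1"
      using \<open>Q \<noteq> 1\<close> by (simp add: d_def)
    finally have "- d + Q * d = 1" .
    then show False
      using key[where a = 1 and b = 0 and c = 1 and a' = "- d" and b' = 1 and c' = d]
        \<open>S = 0\<close> \<open>P = 0\<close> by simp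
  qed
  ultimately show ?thesis by simp
qed

text \<open>x, (e - y)/2 and (e + y)/2 play the roles of the matrix units E12, E11 and E22.\<close>
definition ut_embed :: "'a \<Rightarrow> 'a \<Rightarrow> 'f \<times> 'f \<times> 'f \<Rightarrow> 'a" where
  "ut_embed x y = (\<lambda>(a, b, c). comb x y ((a + c) / 2) b ((c - a) / 2))"

lemma inj_ut_embed:
  assumes two: "(2::'f) \<noteq> 0" and nc: "x ** y \<noteq> y ** x"
  shows "inj (ut_embed x y)"
proof (rule injI)
  fix u v assume uv_eq: "ut_embed x y u = ut_embed x y v"
  obtain a b c a' b' c' where uv: "u = (a, b, c)" "v = (a', b', c')"
    by (metis prod_cases3)
  have halves: "r = (r + s) / 2 - (s - r) / 2" "s = (r + s) / 2 + (s - r) / 2" for r s :: 'f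
    using two by (simp_all add: diff_divide_distrib add_divide_distrib)
  have "(a + c) / 2 = (a' + c') / 2 \<and> b = b' \<and> (c - a) / 2 = (c' - a') / 2"
    using uv_eq by (simp only: uv ut_embed_def prod.case comb_eq_comb_iff[OF nc])
  then show "u = v"
    using halves[where r = a and s = c] halves[where r = a' and s = c'] by (metis uv)
qed

lemma range_ut_embed:
  assumes two: "(2::'f) \<noteq> 0" and nc: "x ** y \<noteq> y ** x"
  shows "range (ut_embed x y) = span {e, x, y}"
proof
  show "range (ut_embed x y) \<subseteq> span {e, x, y}"
    by (auto simp: ut_embed_def comb_in_span_unit_pair)
  show "span {e, x, y} \<subseteq> range (ut_embed x y)"
  proof
    fix z assume "z \<in> span {e, x, y}"
    then obtain a b c where z: "z = comb x y a b c"
      by (auto simp: mem_span_unit_pair_iff)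
    have "ut_embed x y (a - c, b, a + c) = z"
      using two by (simp add: z ut_embed_def comb_eq_comb_iff[OF nc] field_simps)
    then show "z \<in> range (ut_embed x y)" by (metis rangeI)
  qed
qed

lemma iso_to_U_if_relations:
  assumes two: "(2::'f) \<noteq> 0" and x0: "x \<noteq> 0"
    and rel: "x ** x = 0" "y ** y = e" "x ** y = x" "y ** x = - x"
  shows "iso_to_U sc mul e (span {e, x, y})"
proof -
  have "x ** y - y ** x = 2 *s x"
    using rel scale_left_distrib[of 1 1 x] by (simp add: one_add_one)
  then have nc: "x ** y \<noteq> y ** x"
    using two x0 by auto
  have table: "comb x y a b c ** comb x y a' b' c' =
      comb x y (a * a' + c * c') (a * b' + a' * b + (b * c' - c * b')) (a * c' + a' * c)"
    for a b c a' b' c'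
    using mul_comb[of x 0 y 1 0] rel by simp
  have four: "(4::'f) \<noteq> 0" and sixteen: "(16::'f) \<noteq> 0"
    using power_not_zero[OF two, of 2] power_not_zero[OF two, of 4] by simp_all
  let ?\<psi> = "ut_embed x y"
  have "?\<psi> (ut_add u v) = ?\<psi> u + ?\<psi> v" for u v
    using two four by (cases u; cases v)
      (simp add: ut_embed_def ut_add_def comb_add comb_eq_comb_iff[OF nc] field_simps)
  moreover have "?\<psi> (ut_scale r u) = r *s ?\<psi> u" for r u
    using two four by (cases u)
      (simp add: ut_embed_def ut_scale_def comb_scale comb_eq_comb_iff[OF nc] field_simps)
  moreover have "?\<psi> (ut_mul u v) = ?\<psi> u ** ?\<psi> v" for u v
    using two four sixteen by (cases u; cases v)
      (simp add: ut_embed_def ut_mul_def table comb_eq_comb_iff[OF nc] field_simps)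
  moreover have "?\<psi> (1, 0, 1) = e"
    using two by (simp add: ut_embed_def comb_def)
  ultimately show ?thesis
    using iso_to_U_if_embedding[OF inj_ut_embed[OF two nc] range_ut_embed[OF two nc]] by blast
qed

end

lemma is_algebra_iff_unital_algebra: "is_algebra sc mul e \<longleftrightarrow> unital_algebra sc mul e"
  by (auto simp: is_algebra_def unital_algebra_def unital_algebra_axioms_def)

lemma ut_mul_assoc: "ut_mul (ut_mul u v) w = ut_mul u (ut_mul v w)"
  by (cases u; cases v; cases w) (simp add: ut_mul_def algebra_simps)

lemma assoc_on_if_iso_to_U:
  fixes sc :: "'f::field \<Rightarrow> 'a::ab_group_add \<Rightarrow> 'a"
  assumes closed: "\<forall>x\<in>B. \<forall>y\<in>B. mul x y \<in> B" and iso: "iso_to_U sc mul e B"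
  shows "assoc_on mul B"
proof -
  obtain \<phi> :: "'a \<Rightarrow> 'f \<times> 'f \<times> 'f" where "inj_on \<phi> B"
    and hom: "\<forall>x\<in>B. \<forall>y\<in>B. \<phi> (mul x y) = ut_mul (\<phi> x) (\<phi> y)"
    using iso unfolding iso_to_U_def bij_betw_def by blast
  then show ?thesis
    unfolding assoc_on_def using closed by (simp add: ut_mul_assoc flip: inj_on_eq_iff)
qed

locale involutive_algebra = unital_algebra sc mul e
  for sc :: "'f::field \<Rightarrow> 'a::ab_group_add \<Rightarrow> 'a" (infixr \<open>*s\<close> 75)
    and mul :: "'a \<Rightarrow> 'a \<Rightarrow> 'a" (infixl \<open>**\<close> 70) and e :: 'a +
  fixes invol :: "'a \<Rightarrow> 'a"
  assumes invol_add: "invol (x + y) = invol x + invol y"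
    and invol_scale: "invol (c *s x) = c *s invol x"
    and invol_mul: "invol (x ** y) = invol y ** invol x"
    and invol_invol [simp]: "invol (invol x) = x"
    and add_invol_in_unit_line: "\<exists>t. x + invol x = t *s e"
    and mul_invol_in_unit_line: "\<exists>n. x ** invol x = n *s e"
    and unit_neq_zero: "e \<noteq> 0"

lemma involutive_algebra_if_involutive:
  assumes "is_algebra sc mul e" "involutive sc mul e" "e \<noteq> 0"
  obtains invol where "involutive_algebra sc mul e invol"
proof -
  from assms(2) obtain invol where "involutive_algebra_axioms sc mul e invol"
    using assms(3) unfolding involutive_def involutive_algebra_axioms_def by blast
  with assms(1) show thesis
    using that by (simp add: involutive_algebra_def is_algebra_iff_unital_algebra)
qed

context involutive_algebra
begin

lemma invol_zero [simp]: "invol 0 = 0"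
  using invol_add[of 0 0] by simp

lemma invol_minus: "invol (- x) = - invol x"
  using invol_add[of x "- x"] by (metis minus_unique add.right_inverse invol_zero)

lemma invol_diff: "invol (x - y) = invol x - invol y"
  using invol_add[of x "- y"] by (simp add: invol_minus)

definition trace :: "'a \<Rightarrow> 'f" where
  "trace x = (THE t. x + invol x = t *s e)"

definition quad_norm :: "'a \<Rightarrow> 'f" where
  "quad_norm x = (THE n. x ** invol x = n *s e)"

lemma add_invol_eq_trace: "x + invol x = trace x *s e"
  unfolding trace_def using add_invol_in_unit_line[of x] by (auto intro: theI simp: unit_neq_zero)

lemma mul_invol_eq_quad_norm: "x ** invol x = quad_norm x *s e"
  unfolding quad_norm_def using mul_invol_in_unit_line[of x] by (auto intro: theI simp: unit_neq_zero)

lemma trace_eqI: "x + invol x = t *s e \<Longrightarrow> trace x = t"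
  using add_invol_eq_trace[of x] unit_neq_zero by simp

lemma invol_eq: "invol x = trace x *s e - x"
  using add_invol_eq_trace[of x] by (simp add: algebra_simps)

lemma invol_eq_minus_if_trace_eq_0: "trace x = 0 \<Longrightarrow> invol x = - x"
  by (simp add: invol_eq)

lemma mul_self_eq: "x ** x = trace x *s x - quad_norm x *s e"
  using mul_invol_eq_quad_norm[of x] by (simp add: invol_eq mul_simps algebra_simps)

lemma invol_unit [simp]: "invol e = e"
  using invol_mul[of e "invol e"] by simp

lemma trace_unit: "trace e = 2"
  by (rule trace_eqI) (simp add: scale_left_distrib[of 1 1, simplified])

lemma trace_add: "trace (x + y) = trace x + trace y"
  by (rule trace_eqI)
    (simp add: invol_add scale_left_distrib add_invol_eq_trace[symmetric] algebra_simps)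

lemma trace_scale: "trace (c *s x) = c * trace x"
  by (rule trace_eqI)
    (simp add: invol_scale add_invol_eq_trace[symmetric] scale_right_distrib[symmetric]
      flip: scale_scale)

lemma trace_diff: "trace (x - y) = trace x - trace y"
  by (rule trace_eqI)
    (simp add: invol_diff scale_left_diff_distrib add_invol_eq_trace[symmetric] algebra_simps)

lemma invol_mul_self: "invol x ** x = quad_norm x *s e"
  using mul_self_eq[of x] by (simp add: invol_eq mul_simps)

lemma trace_comb: "trace (comb p q a b c) = 2 * a + b * trace p + c * trace q"
  by (simp add: comb_def trace_add trace_scale trace_unit)

lemma trace_commutator_eq_0:
  assumes "trace x = 0" "trace y = 0"
  shows "trace (x ** y - y ** x) = 0"
  by (rule trace_eqI)
    (simp add: assms invol_diff invol_mul invol_eq_minus_if_trace_eq_0 mul_minus_left mul_minus_right)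

lemma anticommutator_eq_trace:
  assumes "trace x = 0" "trace y = 0"
  shows "x ** y + y ** x = trace (x ** y) *s e"
  using add_invol_eq_trace[of "x ** y"]
  by (simp add: assms invol_mul invol_eq_minus_if_trace_eq_0 mul_minus_left mul_minus_right)

lemma subalg_span_unit_pair:
  assumes "a ** b \<in> span {e, a, b}"
  shows "subalg sc mul e (span {e, a, b})"
proof -
  let ?S = "span {e, a, b}"
  have square: "z ** z \<in> ?S" if "z \<in> ?S" for z
    unfolding mul_self_eq using that by (intro span_diff span_scale) (auto intro: span_base)
  have "b ** a = (a + b) ** (a + b) - a ** a - a ** b - b ** b"
    by (simp add: mul_simps algebra_simps)
  also have "\<dots> \<in> ?S"
    using assms by (intro span_diff square) (auto intro: span_base span_add)
  finally have "b ** a \<in> ?S" .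
  then have "u ** v \<in> ?S" if "u \<in> {a, b}" "v \<in> {a, b}" for u v
    using that assms square[of a] square[of b] by (auto intro: span_base)
  then show ?thesis
    by (auto simp: subalg_def intro: span_base mul_mem_span_unit_pair)
qed

lemma mul_eq_unit_commute_if_assoc_on:
  assumes assoc: "assoc_on mul (span {e, a, b})" and ab: "a ** b = e"
  shows "b ** a = e"
proof -
  have "trace a *s e - a \<in> span {e, a, b}"
    by (intro span_diff span_scale) (simp_all add: span_base)
  then have "invol a \<in> span {e, a, b}"
    by (simp only: invol_eq[of a])
  moreover have "a \<in> span {e, a, b}" "b \<in> span {e, a, b}"
    by (simp_all add: span_base)
  ultimately have "(invol a ** a) ** b = invol a ** (a ** b)"
    using assoc unfolding assoc_on_def by blast
  then have b: "quad_norm a *s b = invol a"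
    by (simp add: invol_mul_self mul_scale_left ab)
  show ?thesis
  proof (cases "quad_norm a = 0")
    case True
    then have "invol a = 0"
      using b by simp
    then have "a = 0"
      by (metis invol_invol invol_zero)
    then show ?thesis
      using ab unit_neq_zero by simp
  next
    case False
    have "b ** a = (1 / quad_norm a) *s ((quad_norm a *s b) ** a)"
      using False by (simp add: mul_scale_left)
    also have "\<dots> = e"
      using False by (simp add: b invol_mul_self mul_scale_left)
    finally show ?thesis .
  qed
qed

lemma vN_finite_if_noncomm_subalg_assoc:
  assumes "\<forall>B. subalg sc mul e B \<and> dim B = 3 \<longrightarrow> comm_on mul B \<or> assoc_on mul B"
  shows "vN_finite mul e"
  unfolding vN_finite_def
proof (intro allI impI)
  fix a b assume ab: "a ** b = e"
  show "b ** a = e"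
  proof (cases "a ** b = b ** a")
    case True
    with ab show ?thesis by simp
  next
    case False
    let ?S = "span {e, a, b}"
    have "subalg sc mul e ?S"
      by (rule subalg_span_unit_pair) (simp add: ab span_base)
    moreover have "dim ?S = 3"
      using False by (rule dim_span_unit_pair_noncomm)
    moreover have "\<not> comm_on mul ?S"
      using False by (auto simp: comm_on_def intro: span_base)
    ultimately have "assoc_on mul ?S"
      using assms by blast
    then show ?thesis
      using ab by (rule mul_eq_unit_commute_if_assoc_on)
  qed
qed

lemma exists_trace_zero_noncomm:
  assumes two: "(2::'f) \<noteq> 0" and B: "subalg sc mul e B" and nc: "\<not> comm_on mul B"
  obtains p q where "p \<in> B" "q \<in> B" "trace p = 0" "trace q = 0" "p ** q \<noteq> q ** p"
proof -
  obtain u v where uv: "u \<in> B" "v \<in> B" "u ** v \<noteq> v ** u"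
    using nc by (auto simp: comm_on_def)
  define p where "p = u - (trace u / 2) *s e"
  define q where "q = v - (trace v / 2) *s e"
  have "p \<in> B" "q \<in> B"
    using B uv by (simp_all add: subalg_def p_def q_def subspace_diff subspace_scale)
  moreover have "trace p = 0" "trace q = 0"
    using two by (simp_all add: p_def q_def trace_diff trace_scale trace_unit)
  moreover have "p ** q - q ** p = u ** v - v ** u"
    by (simp add: p_def q_def mul_simps algebra_simps)
  then have "p ** q \<noteq> q ** p"
    using uv(3) by auto
  ultimately show thesis
    using that by blast
qed

lemma exists_commutator_eq_double:
  assumes two: "(2::'f) \<noteq> 0" and B: "subalg sc mul e B" "dim B = 3" and nc: "\<not> comm_on mul B"
  obtains x y where "x \<in> B" "y \<in> B" "x \<noteq> 0" "trace x = 0" "trace y = 0"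
    "x ** y - y ** x = 2 *s x"
proof -
  obtain p q where pq: "p \<in> B" "q \<in> B" "trace p = 0" "trace q = 0" "p ** q \<noteq> q ** p"
    using exists_trace_zero_noncomm[OF two B(1) nc] .
  have sub: "subspace B"
    using B(1) by (simp add: subalg_def)
  define w where "w = p ** q - q ** p"
  have "w \<in> B" "w \<noteq> 0" "trace w = 0"
    using B(1) pq by (simp_all add: w_def subalg_def subspace_diff trace_commutator_eq_0)
  moreover obtain a b c where wc: "w = comb p q a b c"
    using \<open>w \<in> B\<close> subalg_eq_span_unit_pair_if_noncomm[OF B pq(1,2,5)]
    by (auto simp: mem_span_unit_pair_iff)
  ultimately have "2 * a = 0"
    using pq(3,4) by (simp add: trace_comb)
  then have w: "w = b *s p + c *s q"
    using two by (simp add: wc comb_def)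
  obtain z k where z: "z \<in> {p, q}" "k \<noteq> 0" "w ** z - z ** w = k *s w"
    using exists_commutator_eigenvector[OF w_def w \<open>w \<noteq> 0\<close>] .
  show thesis
  proof (rule that)
    show "w \<in> B" "w \<noteq> 0" "trace w = 0" by fact+
    show "(2 / k) *s z \<in> B" "trace ((2 / k) *s z) = 0"
      using z(1) pq sub by (auto simp: subspace_scale trace_scale)
    show "w ** ((2 / k) *s z) - ((2 / k) *s z) ** w = 2 *s w"
      using z(2,3) by (simp add: mul_scale_left mul_scale_right flip: scale_right_diff_distrib)
  qed
qed

lemma commutator_relations:
  assumes two: "(2::'f) \<noteq> 0" and tr: "trace x = 0" "trace y = 0"
    and comm: "x ** y - y ** x = 2 *s x"
  shows "x ** y = (trace (x ** y) / 2) *s e + x" "y ** x = (trace (x ** y) / 2) *s e - x"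
proof -
  have "2 *s (x ** y) = (x ** y + y ** x) + (x ** y - y ** x)"
    using scale_left_distrib[of 1 1 "x ** y"] by (simp add: one_add_one algebra_simps)
  also have "\<dots> = 2 *s ((trace (x ** y) / 2) *s e + x)"
    using two by (simp add: anticommutator_eq_trace[OF tr] comm scale_right_distrib)
  finally show xy: "x ** y = (trace (x ** y) / 2) *s e + x"
    using two by simp
  have "y ** x = x ** y - 2 *s x"
    using comm by (simp add: algebra_simps)
  also have "\<dots> = (trace (x ** y) / 2) *s e - x"
    using scale_left_distrib[of 1 1 x] by (subst xy) (simp add: one_add_one algebra_simps)
  finally show "y ** x = (trace (x ** y) / 2) *s e - x" .
qed

lemma iso_to_U_if_vN_finite:
  assumes two: "(2::'f) \<noteq> 0" and vN: "vN_finite mul e"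
    and B: "subalg sc mul e B" "dim B = 3" and nc: "\<not> comm_on mul B"
  shows "iso_to_U sc mul e B"
proof -
  obtain x y where xy: "x \<in> B" "y \<in> B" "x \<noteq> 0" "trace x = 0" "trace y = 0"
      "x ** y - y ** x = 2 *s x"
    using exists_commutator_eq_double[OF two B nc] .
  define S where "S = trace (x ** y) / 2"
  have squares: "x ** x = (- quad_norm x) *s e" "y ** y = (- quad_norm y) *s e"
    using mul_self_eq[of x] mul_self_eq[of y] xy(4,5) by simp_all
  have "x ** y = S *s e + x" "y ** x = S *s e - x"
    unfolding S_def by (fact commutator_relations[OF two xy(4-6)])+
  note rel = squares this
  have "x ** y \<noteq> y ** x"
    using xy(3,6) two by auto
  then have "B = span {e, x, y}"
    using subalg_eq_span_unit_pair_if_noncomm[OF B xy(1,2)] by blast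
  moreover have "S = 0" "quad_norm x = 0" "quad_norm y = - 1"
    using structure_constants_if_vN_finite[OF vN two \<open>x ** y \<noteq> y ** x\<close> rel]
    by (auto simp: minus_equation_iff)
  then have "iso_to_U sc mul e (span {e, x, y})"
    using rel by (intro iso_to_U_if_relations[OF two xy(3)]) simp_all
  ultimately show ?thesis by simp
qed

end

theorem proposition4p8:
  fixes sc :: "'f::field \<Rightarrow> 'a::ab_group_add \<Rightarrow> 'a"
    and mul :: "'a \<Rightarrow> 'a \<Rightarrow> 'a" and e :: 'a
  assumes "(2::'f) \<noteq> 0"
    and "is_algebra sc mul e"
    and "involutive sc mul e"
  shows "(vN_finite mul e \<longleftrightarrow>
            (\<forall>B. subalg sc mul e B \<and> vector_space.dim sc B = 3 \<longrightarrow>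
                 comm_on mul B \<or> assoc_on mul B))
       \<and> (vN_finite mul e \<longleftrightarrow>
            (\<forall>B. subalg sc mul e B \<and> vector_space.dim sc B = 3 \<longrightarrow>
                 comm_on mul B \<or> iso_to_U sc mul e B))"
proof (cases "e = 0")
  case True
  interpret unital_algebra sc mul e
    using assms(2) by (simp add: is_algebra_iff_unital_algebra)
  show ?thesis
    using True vN_finite_if_unit_eq_zero dim_eq_zero_if_unit_eq_zero by simp
next
  case False
  obtain invol where "involutive_algebra sc mul e invol"
    using involutive_algebra_if_involutive[OF assms(2,3) False] .
  then interpret involutive_algebra sc mul e invol .
  have "assoc_on mul B" if "subalg sc mul e B" "iso_to_U sc mul e B" for B
    using that by (intro assoc_on_if_iso_to_U) (simp_all add: subalg_def)
  then show ?thesis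
    using iso_to_U_if_vN_finite[OF assms(1)] vN_finite_if_noncomm_subalg_assoc by blast
qed

end
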